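(* Let $b\ge 2$ be even and put $c_i=b^{n+i}+1$. If $n=1$ then $F(SC^{+}(b,1))=b^3-1$. If $n\ge 2$ then $\max\mathrm{Ap}(SC^{+}(b,n),c_0)=c_1+(b-1)c_n$ and $$F(SC^{+}(b,n)) = c_1+(b-1)c_n-c_0=(b-1)(b^{2n}+b^{n}+1).$$
   Context: For an even integer $b\ge2$ and $n\ge0$, $SC^{+}(b,n)=\langle\{b^{n+i}+1: i\in\mathbb{N}\}\rangle$ (submonoid of $(\mathbb{N},+)$ generated by these numbers, a numerical semigroup). $\mathrm{Ap}(S,x)=\{s\in S:s-x\notin S\}$; $F(S)$ is the greatest integer not in $S$. *)

theory Defs
  imports Main
begin

inductive_set monoid_gen :: "nat set \<Rightarrow> nat set" for A :: "nat set" where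
  zero: "0 \<in> monoid_gen A"
| add: "a \<in> A \<Longrightarrow> s \<in> monoid_gen A \<Longrightarrow> a + s \<in> monoid_gen A"

definition SCplus :: "nat \<Rightarrow> nat \<Rightarrow> nat set" where
  "SCplus b n = monoid_gen {b ^ (n + i) + 1 | i. True}"

definition Apery :: "nat set \<Rightarrow> nat \<Rightarrow> nat set" where
  "Apery S x = {s \<in> S. \<not> (\<exists>t\<in>S. int t = int s - int x)}"

definition Frobenius :: "nat set \<Rightarrow> int" where
  "Frobenius S = (GREATEST z :: int. z \<notin> int ` S)"

end

theory Submission
  imports Defs "HOL-Number_Theory.Cong"
begin

text \<open>
  Write \<open>B = b\<^sup>n\<close> and \<open>a = b - 1\<close>, so that \<open>c\<^sub>i = b\<^sup>i B + 1\<close> and the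
  Frobenius number is \<open>F = a (B\<^sup>2 + B + 1)\<close>. A sum of \<open>k\<close> generators with exponents
  \<open>i\<^sub>1, \<dots>, i\<^sub>k\<close> equals \<open>k + B N\<close> with \<open>N = \<Sum> b^i\<^sub>j\<close>; here \<open>N \<ge> k\<close>,
  \<open>N \<equiv> k (mod a)\<close>, and \<open>N \<equiv> k (mod b)\<close> with \<open>k < b\<close> forces all exponents to vanish.
  As \<open>a\<close> is odd and \<open>B \<equiv> 1 (mod a)\<close>, the equation \<open>k + B N = F\<close> forces \<open>k = a\<close>
  and \<open>N = aB + a \<equiv> a (mod b)\<close>, which is impossible: \<open>F\<close> is a gap.

  Conversely, every \<open>m\<close> in \<open>(F, F + c\<^sub>0]\<close> is \<open>a c\<^sub>n + c\<^sub>1\<close> or \<open>a c\<^sub>n + s a + j c\<^sub>0\<close>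
  with \<open>s < B\<close>, and \<open>a c\<^sub>n + s a\<close> lies in the semigroup because \<open>c\<^sub>i\<^sub>+\<^sub>1 + a = b c\<^sub>i\<close>.
  Adding multiples of \<open>c\<^sub>0\<close> then covers everything above \<open>F\<close>.
\<close>

lemma monoid_gen_add: "x \<in> monoid_gen A \<Longrightarrow> y \<in> monoid_gen A \<Longrightarrow> x + y \<in> monoid_gen A"
  by (induction x rule: monoid_gen.induct) (auto simp: add.assoc intro: monoid_gen.add)

lemma monoid_gen_generator: "a \<in> A \<Longrightarrow> a \<in> monoid_gen A"
  using monoid_gen.add[OF _ monoid_gen.zero] by simp

lemma monoid_gen_mult: "x \<in> monoid_gen A \<Longrightarrow> q * x \<in> monoid_gen A"
  by (induction q) (auto intro: monoid_gen_add monoid_gen.zero)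

lemma SCplus_generator: "b ^ (n + i) + 1 \<in> SCplus b n"
  unfolding SCplus_def by (rule monoid_gen_generator) blast

lemma SCplus_add: "x \<in> SCplus b n \<Longrightarrow> y \<in> SCplus b n \<Longrightarrow> x + y \<in> SCplus b n"
  unfolding SCplus_def by (rule monoid_gen_add)

lemma SCplus_mult: "x \<in> SCplus b n \<Longrightarrow> q * x \<in> SCplus b n"
  unfolding SCplus_def by (rule monoid_gen_mult)

lemma SCplus_elem_exponents:
  assumes "m \<in> SCplus b n"
  obtains "is" where "m = length is + b ^ n * (\<Sum>i\<leftarrow>is. b ^ i)"
proof -
  from assms have "\<exists>is. m = length is + b ^ n * (\<Sum>i\<leftarrow>is. b ^ i)"
    unfolding SCplus_def
  proof (induction m rule: monoid_gen.induct)
    case zero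
    show ?case by (intro exI[of _ "[]"]) simp
  next
    case (add g s)
    then obtain i "is" where "g = b ^ (n + i) + 1" and "s = length is + b ^ n * (\<Sum>i\<leftarrow>is. b ^ i)"
      by blast
    then show ?case by (intro exI[of _ "i # is"]) (simp add: algebra_simps power_add)
  qed
  with that show ?thesis by blast
qed

lemma Frobenius_eqI:
  fixes S :: "nat set"
  assumes "F \<notin> S" and "\<And>m. F < m \<Longrightarrow> m \<in> S"
  shows "Frobenius S = int F"
  unfolding Frobenius_def
proof (rule Greatest_equality)
  show "int F \<notin> int ` S" using assms(1) by auto
next
  fix z :: int
  assume "z \<notin> int ` S"
  show "z \<le> int F"
  proof (rule ccontr)
    assume "\<not> z \<le> int F"
    then have "F < nat z" and "z = int (nat z)" by linarith+
    then have "z \<in> int ` S" using assms(2) by blast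
    with \<open>z \<notin> int ` S\<close> show False ..
  qed
qed

lemma Max_Apery_eqI:
  fixes S :: "nat set"
  assumes "F \<notin> S" and "\<And>m. F < m \<Longrightarrow> m \<in> S" and "0 < x"
  shows "Max (Apery S x) = F + x"
proof -
  have upper: "s \<le> F + x" if "s \<in> Apery S x" for s
  proof (rule ccontr)
    assume "\<not> s \<le> F + x"
    then have "s - x \<in> S" and "int (s - x) = int s - int x"
      using assms(2)[of "s - x"] by auto
    with that show False unfolding Apery_def by blast
  qed
  then have "finite (Apery S x)"
    by (meson finite_atMost finite_subset subsetI atMost_iff)
  moreover have "F + x \<in> Apery S x"
    using assms unfolding Apery_def by auto
  ultimately show ?thesis using upper by (intro Max_eqI)
qed

lemma above_in_if_window_in:
  fixes S :: "nat set"
  assumes "0 < x" and "\<And>m. m \<in> S \<Longrightarrow> x + m \<in> S"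
    and "\<And>m. F < m \<Longrightarrow> m \<le> F + x \<Longrightarrow> m \<in> S"
  shows "F < m \<Longrightarrow> m \<in> S"
proof (induction m rule: less_induct)
  case (less m)
  show ?case
  proof (cases "m \<le> F + x")
    case True
    with less.prems show ?thesis by (rule assms(3))
  next
    case False
    then have "m - x \<in> S" using less assms(1) by simp
    then show ?thesis using assms(2)[of "m - x"] False by simp
  qed
qed

lemma power_cong_one_mod_pred:
  fixes b :: nat
  assumes "1 \<le> b"
  shows "[b ^ i = 1] (mod (b - 1))"
proof -
  have "[b = 1] (mod (b - 1))"
    using assms by (simp add: cong_def le_mod_geq)
  then show ?thesis using cong_pow by fastforce
qed

lemma length_le_power_sum_list:
  fixes b :: nat
  assumes "1 \<le> b"
  shows "length is \<le> (\<Sum>i\<leftarrow>is. b ^ i)"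
proof (induction "is")
  case (Cons i "is")
  have "1 \<le> b ^ i" using assms by simp
  with Cons show ?case by simp
qed simp

lemma power_sum_list_cong_length:
  fixes b :: nat
  assumes "1 \<le> b"
  shows "[(\<Sum>i\<leftarrow>is. b ^ i) = length is] (mod (b - 1))"
proof (induction "is")
  case Nil
  show ?case by simp
next
  case (Cons i "is")
  from cong_add[OF power_cong_one_mod_pred[OF assms] Cons.IH] show ?case by simp
qed

lemma power_sum_list_eq_length:
  fixes b :: nat
  assumes "length is < b" and "[(\<Sum>i\<leftarrow>is. b ^ i) = length is] (mod b)"
  shows "(\<Sum>i\<leftarrow>is. b ^ i) = length is"
proof -
  define t where "t = length (filter (\<lambda>i. i = 0) is)"
  have "[(\<Sum>i\<leftarrow>is. b ^ i) = t] (mod b)"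
    unfolding t_def
  proof (induction "is")
    case (Cons i "is")
    show ?case
    proof (cases i)
      case 0
      with cong_add[OF cong_refl[of 1] Cons.IH] show ?thesis by simp
    next
      case (Suc k)
      then have "[b ^ i = 0] (mod b)" by (simp add: cong_0_iff)
      with cong_add[OF this Cons.IH] Suc show ?thesis by simp
    qed
  qed simp
  then have "[t = length is] (mod b)"
    using assms(2) cong_sym cong_trans by blast
  moreover have "t \<le> length is" unfolding t_def by (rule length_filter_le)
  ultimately have "t = length is"
    using assms(1) cong_less_modulus_unique_nat by simp
  then have "filter (\<lambda>i. i \<noteq> 0) is = []"
    using sum_length_filter_compl[of "\<lambda>i. i = 0" "is"] by (simp add: t_def)
  then have "\<forall>i\<in>set is. i = 0" by (simp add: filter_empty_conv)
  then show ?thesis by (induction "is") auto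
qed

lemma decomposition_odd_modulus_exists:
  fixes a B D :: nat
  assumes "odd a" and "[B = 1] (mod a)" and "a * B < D" and "D \<le> a * B + B"
  shows "\<exists>j s. s < B \<and> D = j * (B + 1) + s * a"
proof -
  \<comment> \<open>\<open>(a + 1) div 2\<close> inverts 2 modulo \<open>a\<close>, and \<open>B + 1 \<equiv> 2\<close>, so \<open>j\<close> solves \<open>j (B + 1) \<equiv> D\<close>\<close>
  define j0 where "j0 = D * ((a + 1) div 2) mod a"
  define j where "j = (if j0 = 0 then a else j0)"
  have a_pos: "0 < a" using \<open>odd a\<close> by (rule odd_pos)
  have j_bounds: "1 \<le> j" "j \<le> a"
    using a_pos by (auto simp: j_def j0_def)
  have "[j = D * ((a + 1) div 2)] (mod a)"
    by (auto simp: j_def j0_def cong_def)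
  then have "[j * (B + 1) = D * ((a + 1) div 2) * (1 + 1)] (mod a)"
    using assms(2) by (intro cong_mult cong_add) auto
  also have "D * ((a + 1) div 2) * (1 + 1) = D * a + D"
    using \<open>odd a\<close> by (auto elim!: oddE simp: algebra_simps)
  also have "[\<dots> = D] (mod a)"
    by (simp add: cong_def)
  finally have cong_D: "[j * (B + 1) = D] (mod a)" .
  have j_upper: "j * (B + 1) < D + a"
  proof -
    have "j * (B + 1) \<le> a * (B + 1)" using j_bounds(2) by (rule mult_le_mono1)
    then show ?thesis using assms(3) by (simp add: algebra_simps)
  qed
  have "j * (B + 1) \<le> D"
  proof (rule ccontr)
    assume "\<not> j * (B + 1) \<le> D"
    then obtain q where "j * (B + 1) = q * a + D" and "q \<noteq> 0"
      using cong_D cong_le_nat[of D "j * (B + 1)" a] by force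
    then show False using j_upper by (cases q) auto
  qed
  then obtain s where s: "D = s * a + j * (B + 1)"
    using cong_le_nat cong_D cong_sym by blast
  have "B + 1 \<le> j * (B + 1)" using mult_le_mono1[OF j_bounds(1), of "B + 1"] by simp
  then have "s * a < a * B" using s assms(4) by linarith
  then have "s < B" using a_pos by (simp add: mult.commute)
  then show ?thesis using s by (intro exI[of _ j] exI[of _ s]) simp
qed

lemma decomposition_odd_modulus_unique:
  fixes a B k N :: nat
  assumes "odd a" and "[B = 1] (mod a)" and "a < B" and "k \<le> N" and "[N = k] (mod a)"
    and sum: "k + B * N = a * B * B + a * B + a"
  shows "k = a \<and> N = a * B + a"
proof -
  have N_upper: "N \<le> a * B + a"
  proof (rule ccontr)
    assume "\<not> N \<le> a * B + a"
    then have "B * (a * B + a + 1) \<le> B * N" by (intro mult_le_mono2) simp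
    then show False using sum \<open>a < B\<close> by (simp add: algebra_simps)
  qed
  have N_lower: "a * B < N"
  proof (rule ccontr)
    assume "\<not> a * B < N"
    then have "k \<le> a * B" and "B * N \<le> a * B * B"
      using \<open>k \<le> N\<close> mult_le_mono2[of N "a * B" B] by (auto simp: mult.commute)
    then show False using sum odd_pos[OF \<open>odd a\<close>] by linarith
  qed
  define j where "j = N - a * B"
  have N_eq: "N = a * B + j" and j_pos: "0 < j" and j_le: "j \<le> a"
    using N_upper N_lower by (auto simp: j_def)
  have k_eq: "k + B * j = a * (B + 1)"
    using sum N_eq by (simp add: algebra_simps)
  have "[k + j = k + B * j] (mod a)"
    using cong_scalar_right[OF assms(2), of j] by (simp add: cong_add_lcancel_nat cong_sym_eq)
  also have "[k + B * j = 0] (mod a)"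
    unfolding k_eq by (simp add: cong_0_iff)
  finally have "[k + j = 0] (mod a)" .
  moreover have "[j = k] (mod a)"
  proof -
    have "[j = a * B + j] (mod a)" by (simp add: cong_def)
    also have "[a * B + j = k] (mod a)" using assms(5) by (simp add: N_eq)
    finally show ?thesis .
  qed
  ultimately have "[j + j = 0] (mod a)"
    by (metis cong_add cong_refl cong_trans add.commute)
  then have "a dvd 2 * j" by (simp add: cong_0_iff mult_2)
  then have "a dvd j"
    using \<open>odd a\<close> by (simp add: coprime_dvd_mult_right_iff coprime_commute odd_iff_mod_2_eq_one)
  then have "j = a" using j_pos j_le by (simp add: dvd_imp_le le_antisym)
  then show ?thesis using k_eq N_eq by (simp add: algebra_simps)
qed

lemma SCplus_gen_mult_add:
  assumes "1 \<le> b" and "p * (b - 1) \<le> q * (b ^ i - 1)"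
  shows "q * (b ^ (n + i) + 1) + p * (b - 1) \<in> SCplus b n"
  using assms(2)
proof (induction i arbitrary: p q)
  case 0
  then have "p * (b - 1) = 0" by simp
  moreover have "q * (b ^ (n + 0) + 1) \<in> SCplus b n" by (rule SCplus_mult[OF SCplus_generator])
  ultimately show ?case by (simp only: add_0_right)
next
  case (Suc i)
  define c where "c = b ^ (n + i) + 1"
  define c' where "c' = b ^ (n + Suc i) + 1"
  have step: "c' + (b - 1) = b * c"
    using assms(1) by (simp add: c_def c'_def algebra_simps)
  have "q * c' + p * (b - 1) \<in> SCplus b n"
  proof (cases "p \<le> q")
    case True
    then obtain d where "q = p + d" using le_Suc_ex by blast
    then have "q * c' + p * (b - 1) = d * c' + p * (c' + (b - 1))"
      by (simp add: algebra_simps)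
    also have "\<dots> = d * c' + (p * b) * c"
      unfolding step by (simp add: mult.assoc)
    finally have "q * c' + p * (b - 1) = d * c' + (p * b) * c" .
    moreover have "d * c' + (p * b) * c \<in> SCplus b n"
      unfolding c_def c'_def by (intro SCplus_add SCplus_mult SCplus_generator)
    ultimately show ?thesis by (simp only:)
  next
    case False
    then obtain d where d: "p = q + d" by (metis le_Suc_ex nat_le_linear)
    then have "q * c' + p * (b - 1) = q * (c' + (b - 1)) + d * (b - 1)"
      by (simp add: add_mult_distrib add_mult_distrib2)
    also have "\<dots> = (q * b) * c + d * (b - 1)"
      unfolding step by (simp add: mult.assoc)
    finally have split: "q * c' + p * (b - 1) = (q * b) * c + d * (b - 1)" .
    have "b ^ Suc i - 1 = b * (b ^ i - 1) + (b - 1)"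
      using assms(1) by (simp add: algebra_simps)
    then have "q * (b ^ Suc i - 1) = (q * b) * (b ^ i - 1) + q * (b - 1)"
      by (simp add: add_mult_distrib2 mult.assoc)
    moreover have "p * (b - 1) = q * (b - 1) + d * (b - 1)"
      using d by (simp add: add_mult_distrib)
    ultimately have "d * (b - 1) \<le> (q * b) * (b ^ i - 1)"
      using Suc.prems by linarith
    then have "(q * b) * c + d * (b - 1) \<in> SCplus b n"
      unfolding c_def by (rule Suc.IH)
    with split show ?thesis by (simp only:)
  qed
  then show ?case unfolding c'_def .
qed

definition SCplus_Frobenius :: "nat \<Rightarrow> nat \<Rightarrow> nat" where
  "SCplus_Frobenius b n = (b - 1) * (b ^ (2 * n) + b ^ n + 1)"

lemma SCplus_Frobenius_eq: "SCplus_Frobenius b n = (b - 1) * (b ^ n * b ^ n + b ^ n + 1)"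
  by (simp only: SCplus_Frobenius_def mult_2 power_add)

lemma SCplus_Frobenius_notin:
  assumes "even b" and "2 \<le> b" and "1 \<le> n"
  shows "SCplus_Frobenius b n \<notin> SCplus b n"
proof
  define a where "a = b - 1"
  define B where "B = b ^ n"
  assume "SCplus_Frobenius b n \<in> SCplus b n"
  then have "a * (B * B + B + 1) \<in> SCplus b n"
    by (simp only: SCplus_Frobenius_eq a_def B_def)
  then obtain "is" where rep: "a * (B * B + B + 1) = length is + B * (\<Sum>i\<leftarrow>is. b ^ i)"
    unfolding B_def by (rule SCplus_elem_exponents)
  define k where "k = length is"
  define N where "N = (\<Sum>i\<leftarrow>is. b ^ i)"
  have "odd a" and "0 < a" and "a < b"
    using assms(1,2) by (auto simp: a_def)
  have "b dvd B" and "b \<le> B"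
    using assms(2,3) by (auto simp: B_def dvd_power self_le_power)
  have "[B = 1] (mod a)"
    using power_cong_one_mod_pred[of b n] assms(2) by (simp add: a_def B_def)
  moreover have "k \<le> N" and "[N = k] (mod a)"
    using length_le_power_sum_list[of b "is"] power_sum_list_cong_length[of b "is"] assms(2)
    by (simp_all add: k_def N_def a_def)
  moreover have "k + B * N = a * B * B + a * B + a"
    using rep by (simp add: k_def N_def algebra_simps)
  ultimately have "k = a" and N_eq: "N = a * B + a"
    using decomposition_odd_modulus_unique \<open>odd a\<close> \<open>a < b\<close> \<open>b \<le> B\<close> by fastforce+
  have "[a * B + a = 0 + a] (mod b)"
    using \<open>b dvd B\<close> by (intro cong_add) (simp_all add: cong_0_iff)
  then have "N = k"
    using power_sum_list_eq_length[of "is" b] \<open>k = a\<close> \<open>a < b\<close>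
    by (simp add: N_eq[symmetric] N_def k_def)
  then show False
    using N_eq \<open>k = a\<close> \<open>0 < a\<close> \<open>b \<le> B\<close> assms(2) by simp
qed

lemma SCplus_window:
  assumes "even b" and "2 \<le> b" and "1 \<le> n"
    and "SCplus_Frobenius b n < m" and "m \<le> SCplus_Frobenius b n + (b ^ n + 1)"
  shows "m \<in> SCplus b n"
proof -
  define a where "a = b - 1"
  define B where "B = b ^ n"
  define D where "D = m - a * (B * B + 1)"
  have "odd a" and b_eq: "b = a + 1"
    using assms(1,2) by (auto simp: a_def)
  have "b \<le> B" using assms(2,3) by (simp add: B_def self_le_power)
  have c_n: "b ^ (n + n) + 1 = B * B + 1" by (simp add: B_def power_add)
  have "SCplus_Frobenius b n = a * (B * B + B + 1)"
    by (simp only: SCplus_Frobenius_eq a_def B_def)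
  also have "\<dots> = a * (B * B + 1) + a * B"
    by (simp add: algebra_simps)
  finally have F_eq: "SCplus_Frobenius b n = a * (B * B + 1) + a * B" .
  have "a * (B * B + 1) + a * B < m" and "m \<le> a * (B * B + 1) + a * B + (B + 1)"
    using assms(4,5) by (simp_all only: F_eq B_def)
  then have m_eq: "m = a * (B * B + 1) + D" and "a * B < D" and "D \<le> a * B + B + 1"
    by (auto simp: D_def)
  have base: "a * (B * B + 1) \<in> SCplus b n"
    using SCplus_mult[OF SCplus_generator[of b n n], of a] unfolding c_n .
  show ?thesis
  proof (cases "D = a * B + B + 1")
    case True
    then have "D = b ^ (n + 1) + 1" by (simp add: B_def b_eq algebra_simps)
    then show ?thesis
      using m_eq base SCplus_add SCplus_generator by metis
  next
    case False
    have "[B = 1] (mod a)"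
      using power_cong_one_mod_pred[of b n] assms(2) by (simp add: a_def B_def)
    moreover have "D \<le> a * B + B"
      using False \<open>D \<le> a * B + B + 1\<close> by simp
    ultimately obtain j s where "s < B" and D_eq: "D = j * (B + 1) + s * a"
      using decomposition_odd_modulus_exists \<open>odd a\<close> \<open>a * B < D\<close> by blast
    have "s \<le> b ^ n - 1" using \<open>s < B\<close> by (simp add: B_def)
    then have "s * (b - 1) \<le> a * (b ^ n - 1)"
      using mult_le_mono1[of s "b ^ n - 1" "b - 1"] by (simp add: a_def mult.commute)
    then have "a * (b ^ (n + n) + 1) + s * (b - 1) \<in> SCplus b n"
      using assms(2) by (intro SCplus_gen_mult_add) simp_all
    moreover have "j * (b ^ (n + 0) + 1) \<in> SCplus b n"
      by (rule SCplus_mult[OF SCplus_generator])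
    moreover have "m = (a * (b ^ (n + n) + 1) + s * (b - 1)) + j * (b ^ (n + 0) + 1)"
      using m_eq D_eq c_n by (simp add: a_def B_def algebra_simps)
    ultimately show ?thesis by (simp add: SCplus_add)
  qed
qed

lemma SCplus_above_Frobenius:
  assumes "even b" and "2 \<le> b" and "1 \<le> n"
    and "SCplus_Frobenius b n < m"
  shows "m \<in> SCplus b n"
  using _ _ _ assms(4)
proof (rule above_in_if_window_in)
  show "0 < b ^ n + 1" by simp
  show "b ^ n + 1 + x \<in> SCplus b n" if "x \<in> SCplus b n" for x
    using SCplus_add[OF SCplus_generator[of b n 0] that] by simp
  show "x \<in> SCplus b n"
    if "SCplus_Frobenius b n < x" and "x \<le> SCplus_Frobenius b n + (b ^ n + 1)" for x
    using SCplus_window assms(1-3) that by blast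
qed

theorem mainTheorem17:
  fixes b n :: nat
  assumes "even b" and "b \<ge> 2"
  defines "c \<equiv> \<lambda>i::nat. b ^ (n + i) + 1"
  shows "(n = 1 \<longrightarrow> Frobenius (SCplus b 1) = int b ^ 3 - 1)
       \<and> (n \<ge> 2 \<longrightarrow>
            Max (Apery (SCplus b n) (c 0)) = c 1 + (b - 1) * c n
          \<and> Frobenius (SCplus b n) = int (c 1 + (b - 1) * c n) - int (c 0)
          \<and> Frobenius (SCplus b n) = (int b - 1) * (int b ^ (2 * n) + int b ^ n + 1))"
proof -
  define F where "F = SCplus_Frobenius b n"
  obtain a where b_eq: "b = a + 1"
    using assms(2) by (intro that[of "b - 1"]) simp
  have "0 < c 0" unfolding c_def by simp
  have Frobenius: "Frobenius (SCplus b n) = int F"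
    and Apery: "Max (Apery (SCplus b n) (c 0)) = F + c 0" if "1 \<le> n"
  proof -
    have gap: "F \<notin> SCplus b n"
      using SCplus_Frobenius_notin[OF assms(1,2) that] unfolding F_def .
    have above: "m \<in> SCplus b n" if "F < m" for m
      using SCplus_above_Frobenius[OF assms(1,2) \<open>1 \<le> n\<close>] that unfolding F_def .
    show "Frobenius (SCplus b n) = int F"
      using gap above by (rule Frobenius_eqI)
    show "Max (Apery (SCplus b n) (c 0)) = F + c 0"
      using gap above \<open>0 < c 0\<close> by (rule Max_Apery_eqI)
  qed
  have F_int: "int F = (int b - 1) * (int b ^ (2 * n) + int b ^ n + 1)"
    by (simp add: F_def SCplus_Frobenius_def b_eq algebra_simps)
  have c_eq: "c 1 + (b - 1) * c n = F + c 0"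
    unfolding c_def F_def SCplus_Frobenius_eq by (simp add: b_eq power_add algebra_simps)
  have "n = 1 \<Longrightarrow> int F = int b ^ 3 - 1"
    unfolding F_int by (simp add: algebra_simps power3_eq_cube)
  with Frobenius show ?thesis
    using Apery F_int c_eq by (auto simp: c_def)
qed

end
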